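(* Let $h:[0,\infty)^3\to[0,\infty)$ be upper semicontinuous and nondecreasing in each variable, and set $g(t)=h(t,t,t)$ for $t\ge0$. Then $g(t)<t$ for every $t>0$ if and only if $\lim_{n\to\infty}g^n(t)=0$ for every $t>0$ (where $g^n$ denotes the $n$-th iterate of $g$). *)

theory Defs
  imports "HOL-Analysis.Analysis"
begin

definition nonneg_orthant3 :: "(real \<times> real \<times> real) set" where
  "nonneg_orthant3 = {(x, y, z). 0 \<le> x \<and> 0 \<le> y \<and> 0 \<le> z}"

definition usc_on :: "'a::topological_space set \<Rightarrow> ('a \<Rightarrow> real) \<Rightarrow> bool" where
  "usc_on S f \<longleftrightarrow> (\<forall>x\<in>S. \<forall>c. f x < c \<longrightarrow> (\<forall>\<^sub>F y in at x within S. f y < c))"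

end

theory Submission
  imports Defs
begin

text \<open>If g t < t for all t > 0 (and hence, by monotonicity, g 0 = 0), every orbit decreases
  to some limit L \<ge> 0. Were L > 0, upper semicontinuity at L would push g of late orbit points
  below a constant c < L, although the orbit stays above L. Conversely, if g t \<ge> t > 0,
  monotonicity keeps the whole orbit above t.\<close>

lemma usc_on_tendsto_eventually_less:
  assumes "usc_on S f" "L \<in> S" "f L < c" "(X \<longlongrightarrow> L) F" "\<forall>\<^sub>F n in F. X n \<in> S"
  shows "\<forall>\<^sub>F n in F. f (X n) < c"
proof -
  have "\<forall>\<^sub>F y in at L within S. f y < c"
    using assms(1-3) unfolding usc_on_def by blast
  then have "\<forall>\<^sub>F y in nhds L. y \<in> S \<longrightarrow> f y < c"
    using assms(3) by (auto simp: eventually_at_filter elim: eventually_mono)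
  then have "\<forall>\<^sub>F n in F. X n \<in> S \<longrightarrow> f (X n) < c"
    using eventually_compose_filterlim assms(4) by blast
  with assms(5) show ?thesis
    by eventually_elim blast
qed

lemma usc_on_compose:
  assumes "usc_on T f" "continuous_on S \<phi>" "\<phi> ` S \<subseteq> T"
  shows "usc_on S (f \<circ> \<phi>)"
  unfolding usc_on_def
proof (intro ballI allI impI)
  fix x c assume x: "x \<in> S" and less: "(f \<circ> \<phi>) x < c"
  have lim: "(\<phi> \<longlongrightarrow> \<phi> x) (at x within S)"
    using assms(2) x by (simp add: continuous_on_def)
  have ev: "\<forall>\<^sub>F y in at x within S. \<phi> y \<in> T"
    using assms(3) unfolding eventually_at_filter by (intro always_eventually) blast
  have "\<phi> x \<in> T" "f (\<phi> x) < c"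
    using assms(3) x less by auto
  from usc_on_tendsto_eventually_less[OF assms(1) this lim ev]
  show "\<forall>\<^sub>F y in at x within S. (f \<circ> \<phi>) y < c"
    by simp
qed

lemma usc_on_cong:
  assumes "usc_on S f" "\<And>x. x \<in> S \<Longrightarrow> f x = g x"
  shows "usc_on S g"
  unfolding usc_on_def
proof (intro ballI allI impI)
  fix x c assume "x \<in> S" "g x < c"
  then have "\<forall>\<^sub>F y in at x within S. f y < c"
    using assms unfolding usc_on_def by auto
  then show "\<forall>\<^sub>F y in at x within S. g y < c"
    using assms(2) by (auto simp: eventually_at_filter elim: eventually_mono)
qed

lemma mono_on_contraction_fixes_zero:
  fixes g :: "real \<Rightarrow> real"
  assumes "mono_on {0..} g" "0 \<le> g 0" "\<And>t. 0 < t \<Longrightarrow> g t < t"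
  shows "g 0 = 0"
proof (rule ccontr)
  assume "g 0 \<noteq> 0"
  with assms(2) have pos: "0 < g 0" by simp
  then have "g 0 \<le> g (g 0)"
    using assms(1) by (auto intro: mono_onD)
  also have "\<dots> < g 0"
    using assms(3) pos .
  finally show False by simp
qed

lemma funpow_tendsto_zero_of_usc_contraction:
  fixes g :: "real \<Rightarrow> real"
  assumes nonneg: "\<And>t. 0 \<le> t \<Longrightarrow> 0 \<le> g t"
    and zero: "g 0 = 0"
    and contr: "\<And>t. 0 < t \<Longrightarrow> g t < t"
    and usc: "usc_on {0..} g"
    and "0 \<le> t"
  shows "(\<lambda>n. (g ^^ n) t) \<longlonglongrightarrow> 0"
proof -
  define x where "x n = (g ^^ n) t" for n
  have x_Suc: "x (Suc n) = g (x n)" for n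
    by (simp add: x_def)
  have x_nonneg: "0 \<le> x n" for n
    by (induction n) (use \<open>0 \<le> t\<close> in \<open>simp_all add: x_def nonneg\<close>)
  have "g s \<le> s" if "0 \<le> s" for s
    using that contr[of s] zero by (cases "s = 0") auto
  then have "decseq x"
    using x_nonneg by (intro decseq_SucI) (simp add: x_Suc)
  then obtain L where lim: "x \<longlonglongrightarrow> L" and below: "\<And>n. L \<le> x n"
    using decseq_convergent[of x 0] x_nonneg by blast
  have "0 \<le> L"
    using LIMSEQ_le_const[OF lim] x_nonneg by blast
  have "L = 0"
  proof (rule ccontr)
    assume "L \<noteq> 0"
    with \<open>0 \<le> L\<close> have "g L < L" using contr by simp
    define c where "c = (g L + L) / 2"
    have "g L < c" "c < L"
      using \<open>g L < L\<close> by (auto simp: c_def)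
    then have "\<forall>\<^sub>F n in sequentially. g (x n) < c"
      using usc_on_tendsto_eventually_less[OF usc _ _ lim] \<open>0 \<le> L\<close> x_nonneg by simp
    then obtain n where "x (Suc n) < c"
      by (auto simp: x_Suc eventually_sequentially)
    with below[of "Suc n"] \<open>c < L\<close> show False by simp
  qed
  with lim show ?thesis
    by (simp add: x_def[abs_def])
qed

lemma funpow_ge_of_mono_on:
  fixes g :: "'a::order \<Rightarrow> 'a"
  assumes "mono_on {a..} g" "a \<le> t" "t \<le> g t"
  shows "t \<le> (g ^^ n) t"
proof (induction n)
  case (Suc n)
  have "t \<le> g t" by (fact assms(3))
  also have "\<dots> \<le> g ((g ^^ n) t)"
    using assms(2) Suc by (intro mono_onD[OF assms(1)]) (simp_all add: order_trans[OF assms(2)])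
  finally show ?case by simp
qed simp

theorem lemma1:
  fixes h :: "real \<Rightarrow> real \<Rightarrow> real \<Rightarrow> real" and g :: "real \<Rightarrow> real"
  assumes nonneg: "\<And>x y z. 0 \<le> x \<Longrightarrow> 0 \<le> y \<Longrightarrow> 0 \<le> z \<Longrightarrow> 0 \<le> h x y z"
    and usc: "usc_on nonneg_orthant3 (\<lambda>(x, y, z). h x y z)"
    and mono: "\<And>x y z x' y' z'. 0 \<le> x \<Longrightarrow> 0 \<le> y \<Longrightarrow> 0 \<le> z \<Longrightarrow>
                 x \<le> x' \<Longrightarrow> y \<le> y' \<Longrightarrow> z \<le> z' \<Longrightarrow> h x y z \<le> h x' y' z'"
    and g_def: "\<And>t. 0 \<le> t \<Longrightarrow> g t = h t t t"
  shows "(\<forall>t>0. g t < t) \<longleftrightarrow> (\<forall>t>0. (\<lambda>n. (g ^^ n) t) \<longlonglongrightarrow> 0)"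
proof -
  have g_nonneg: "0 \<le> g t" if "0 \<le> t" for t
    using nonneg that g_def by simp
  have g_mono: "mono_on {0..} g"
    by (intro mono_onI) (simp add: g_def mono)
  have "usc_on {0..} ((\<lambda>(x, y, z). h x y z) \<circ> (\<lambda>t. (t, t, t)))"
    by (rule usc_on_compose[OF usc]) (auto intro!: continuous_on_Pair continuous_on_id simp: nonneg_orthant3_def)
  then have g_usc: "usc_on {0..} g"
    by (rule usc_on_cong) (simp add: g_def)
  show ?thesis
  proof (intro iffI allI impI)
    fix t :: real assume contr: "\<forall>t>0. g t < t" and "0 < t"
    then have "g 0 = 0"
      using mono_on_contraction_fixes_zero[OF g_mono] g_nonneg by simp
    then show "(\<lambda>n. (g ^^ n) t) \<longlonglongrightarrow> 0"
      using funpow_tendsto_zero_of_usc_contraction[OF g_nonneg _ _ g_usc] contr \<open>0 < t\<close> by simp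
  next
    fix t :: real assume lim: "\<forall>t>0. (\<lambda>n. (g ^^ n) t) \<longlonglongrightarrow> 0" and "0 < t"
    show "g t < t"
    proof (rule ccontr)
      assume "\<not> g t < t"
      then have "t \<le> (g ^^ n) t" for n
        using funpow_ge_of_mono_on[OF g_mono] \<open>0 < t\<close> by simp
      then have "t \<le> 0"
        using LIMSEQ_le_const[OF lim[rule_format, OF \<open>0 < t\<close>]] by blast
      with \<open>0 < t\<close> show False by simp
    qed
  qed
qed

end
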